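(* For every $\varepsilon\in[0,1]$, $$\min_{P,Q:\ d_{\mathrm{TV}}(P,Q)=\varepsilon}\overline{C}(P,Q)=2\,d\!\left(\tfrac{1-\varepsilon}{2}\,\Big\|\,\tfrac12\right)=(1+\varepsilon)\log(1+\varepsilon)+(1-\varepsilon)\log(1-\varepsilon),$$ where the minimum is over pairs of probability distributions on a common countable set, and it is achieved by $P=\left(\frac{1-\varepsilon}{2},\frac{1+\varepsilon}{2}\right)$, $Q=\left(\frac{1+\varepsilon}{2},\frac{1-\varepsilon}{2}\right)$.
   Context: $d_{\mathrm{TV}}(P,Q)=\frac12\sum_x |P(x)-Q(x)|$. The relative entropy is $D(P\|Q)=\sum_x P(x)\log\frac{P(x)}{Q(x)}$. The capacitory discrimination (Jensen–Shannon divergence) is $\overline{C}(P,Q)=D\!\left(P\,\|\,\frac{P+Q}{2}\right)+D\!\left(Q\,\|\,\frac{P+Q}{2}\right)$. For $p,q\in[0,1]$, $d(p\|q)=p\log\frac pq+(1-p)\log\frac{1-p}{1-q}$ is the binary relative entropy, with $0\log 0=0$. Logarithms are natural. *)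

theory Defs
  imports "HOL-Probability.Probability"
begin

definition tv_dist :: "'a pmf \<Rightarrow> 'a pmf \<Rightarrow> real" where
  "tv_dist P Q = (1/2) * infsum (\<lambda>x. \<bar>pmf P x - pmf Q x\<bar>) UNIV"

definition rel_entropy :: "('a \<Rightarrow> real) \<Rightarrow> ('a \<Rightarrow> real) \<Rightarrow> real" where
  "rel_entropy p q = infsum (\<lambda>x. if p x = 0 then 0 else p x * ln (p x / q x)) UNIV"

definition cap_disc :: "'a pmf \<Rightarrow> 'a pmf \<Rightarrow> real" where
  "cap_disc P Q =
     (let M = (\<lambda>x. (pmf P x + pmf Q x) / 2)
      in rel_entropy (pmf P) M + rel_entropy (pmf Q) M)"

definition bin_rel_entropy :: "real \<Rightarrow> real \<Rightarrow> real" where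
  "bin_rel_entropy p q =
     (if p = 0 then 0 else p * ln (p / q)) +
     (if 1 - p = 0 then 0 else (1 - p) * ln ((1 - p) / (1 - q)))"

end

theory Submission
  imports Defs
begin

text \<open>
  Write \<open>\<phi>(\<epsilon>) = (1+\<epsilon>) ln(1+\<epsilon>) + (1-\<epsilon>) ln(1-\<epsilon>)\<close>.  The capacitory discrimination is
  the sum over the points \<open>x\<close> of the two-point quantity
  \<open>js p q = p ln(p/m) + q ln(q/m)\<close>, with \<open>p = P(x)\<close>, \<open>q = Q(x)\<close>, \<open>m = (p+q)/2\<close>.

  Lower bound: for weights \<open>A, B > 0\<close> with \<open>A + B = 2\<close>, Gibbs' inequality
  \<open>a ln(a/(w m)) \<ge> a - w m\<close> applied to both terms gives \<open>js p q \<ge> p ln A + q ln B\<close>.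
  Putting the larger weight \<open>1+\<epsilon>\<close> on the larger of \<open>p, q\<close> turns this into a bound that
  is linear in \<open>p + q\<close> and \<open>|p - q|\<close>; summing over \<open>x\<close> (where \<open>\<Sum>(p+q) = 2\<close> and
  \<open>\<Sum>|p-q| = 2\<epsilon>\<close>) yields \<open>cap_disc P Q \<ge> \<phi>(\<epsilon>)\<close> for \<open>\<epsilon> < 1\<close>.  The boundary case
  \<open>\<epsilon> = 1\<close> forces disjoint supports, where \<open>js p q = (p+q) ln 2\<close> and the sum is
  exactly \<open>2 ln 2 = \<phi>(1)\<close>.
\<close>

definition kl_term :: "real \<Rightarrow> real \<Rightarrow> real" where
  "kl_term a b = (if a = 0 then 0 else a * ln (a / b))"

definition js :: "real \<Rightarrow> real \<Rightarrow> real" where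
  "js p q = kl_term p ((p + q) / 2) + kl_term q ((p + q) / 2)"

lemma kl_term_weighted_gibbs:
  fixes a m w :: real
  assumes "0 \<le> a" "0 < m" "0 < w"
  shows "a - w * m \<le> kl_term a m - a * ln w"
proof (cases "a = 0")
  case True
  then show ?thesis using assms by (simp add: kl_term_def)
next
  case False
  then have a_pos: "0 < a" using assms by simp
  have "ln ((w * m) / a) \<le> (w * m) / a - 1"
    using a_pos assms by (intro ln_le_minus_one) simp
  then have "a * (1 - (w * m) / a) \<le> a * ln (a / (w * m))"
    using a_pos assms by (intro mult_left_mono) (auto simp: ln_div)
  then have gibbs: "a - w * m \<le> a * ln (a / (w * m))"
    using a_pos by (simp add: algebra_simps)
  have "ln (a / (w * m)) = ln (a / m) - ln w"
    using a_pos assms by (simp add: ln_div ln_mult)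
  then have "a * ln (a / (w * m)) = a * ln (a / m) - a * ln w"
    by (simp add: right_diff_distrib)
  then show ?thesis
    using gibbs False by (simp add: kl_term_def)
qed

lemma js_weighted_lower:
  fixes p q A B :: real
  assumes "0 \<le> p" "0 \<le> q" "0 < A" "0 < B" "A + B = 2"
  shows "p * ln A + q * ln B \<le> js p q"
proof (cases "p + q = 0")
  case True
  then have "p = 0" "q = 0" using assms by linarith+
  then show ?thesis by (simp add: js_def kl_term_def)
next
  case False
  define m where "m = (p + q) / 2"
  have m_pos: "0 < m" using False assms by (simp add: m_def)
  have "p - A * m \<le> kl_term p m - p * ln A"
    using kl_term_weighted_gibbs[OF assms(1) m_pos assms(3)] .
  moreover have "q - B * m \<le> kl_term q m - q * ln B"
    using kl_term_weighted_gibbs[OF assms(2) m_pos assms(4)] .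
  moreover have "(p - A * m) + (q - B * m) = 0"
  proof -
    have "B = 2 - A" using assms(5) by simp
    show ?thesis unfolding m_def \<open>B = 2 - A\<close> by (simp add: field_simps)
  qed
  ultimately show ?thesis unfolding js_def m_def[symmetric] by linarith
qed

text \<open>Choosing the weights \<open>1 \<plusminus> \<epsilon>\<close> according to which of \<open>p, q\<close> is larger gives a bound
  linear in \<open>p + q\<close> and \<open>|p - q|\<close>, which sums to \<open>\<phi>(\<epsilon>)\<close>.\<close>
lemma js_linear_minorant:
  fixes p q \<epsilon> :: real
  assumes "0 \<le> p" "0 \<le> q" "0 \<le> \<epsilon>" "\<epsilon> < 1"
  shows "(ln (1 + \<epsilon>) + ln (1 - \<epsilon>)) / 2 * (p + q)
           + (ln (1 + \<epsilon>) - ln (1 - \<epsilon>)) / 2 * \<bar>p - q\<bar> \<le> js p q"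
proof (cases "q \<le> p")
  case True
  then have "(ln (1 + \<epsilon>) + ln (1 - \<epsilon>)) / 2 * (p + q)
           + (ln (1 + \<epsilon>) - ln (1 - \<epsilon>)) / 2 * \<bar>p - q\<bar> = p * ln (1 + \<epsilon>) + q * ln (1 - \<epsilon>)"
    by (simp add: field_simps)
  also have "\<dots> \<le> js p q"
    using assms by (intro js_weighted_lower) auto
  finally show ?thesis .
next
  case False
  then have "(ln (1 + \<epsilon>) + ln (1 - \<epsilon>)) / 2 * (p + q)
           + (ln (1 + \<epsilon>) - ln (1 - \<epsilon>)) / 2 * \<bar>p - q\<bar> = p * ln (1 - \<epsilon>) + q * ln (1 + \<epsilon>)"
    by (simp add: field_simps)
  also have "\<dots> \<le> js p q"
    using assms by (intro js_weighted_lower) auto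
  finally show ?thesis .
qed

lemma js_disjoint:
  fixes p q :: real
  assumes "p = 0 \<or> q = 0"
  shows "js p q = (p + q) * ln 2"
  using assms by (auto simp: js_def kl_term_def)

lemma kl_term_midpoint_abs_bound:
  fixes p q :: real
  assumes "0 \<le> p" "0 \<le> q"
  shows "\<bar>kl_term p ((p + q) / 2)\<bar> \<le> p * ln 2 + q"
proof (cases "p = 0")
  case True
  then show ?thesis using assms by (simp add: kl_term_def)
next
  case False
  define m where "m = (p + q) / 2"
  have p_pos: "0 < p" using False assms by simp
  then have m_pos: "0 < m" using assms by (simp add: m_def)
  have lower: "p - m \<le> kl_term p m"
    using kl_term_weighted_gibbs[OF assms(1) m_pos, of 1] by simp
  have "ln (p / m) \<le> ln 2"
    using p_pos m_pos assms by (subst ln_le_cancel_iff) (auto simp: divide_simps m_def)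
  then have upper: "kl_term p m \<le> p * ln 2"
    using p_pos by (simp add: kl_term_def mult_left_mono)
  have "0 \<le> p * ln 2" using p_pos by simp
  moreover have "m - p \<le> q" using assms by (simp add: m_def)
  ultimately have "kl_term p m \<le> p * ln 2 + q" "- kl_term p m \<le> p * ln 2 + q"
    using lower upper assms by linarith+
  then show ?thesis unfolding m_def abs_le_iff by blast
qed

lemma has_sum_pmf: "(pmf P has_sum 1) UNIV"
proof -
  have "pmf P summable_on UNIV"
    using abs_summable_equivalent[of "pmf P" UNIV] pmf_abs_summable[of P UNIV]
    by (metis abs_summable_summable)
  moreover have "infsum (pmf P) UNIV = 1"
    using infsetsum_infsum[of "pmf P" UNIV] pmf_abs_summable[of P UNIV]
      infsetsum_pmf_eq_1[of P UNIV] by simp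
  ultimately show ?thesis by (metis has_sum_infsum)
qed

lemma has_sum_tv_dist:
  "((\<lambda>x. \<bar>pmf P x - pmf Q x\<bar>) has_sum (2 * tv_dist P Q)) UNIV"
proof -
  have "((\<lambda>x. pmf P x + pmf Q x) has_sum 2) UNIV"
    using has_sum_add[OF has_sum_pmf has_sum_pmf] by simp
  then have "(\<lambda>x. \<bar>pmf P x - pmf Q x\<bar>) summable_on UNIV"
    by (rule summable_on_comparison_test[OF has_sum_imp_summable]) (auto simp: abs_le_iff)
  then show ?thesis unfolding tv_dist_def by (simp add: has_sum_infsum)
qed

text \<open>Each relative entropy against the midpoint distribution is absolutely convergent,
  dominated by \<open>P(x) ln 2 + Q(x)\<close>; this is what allows \<open>cap_disc\<close> to be summed pointwise.\<close>
lemma summable_kl_term_midpoint: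
  "(\<lambda>x. kl_term (pmf P x) ((pmf P x + pmf Q x) / 2)) summable_on UNIV"
proof (rule abs_summable_summable)
  have "((\<lambda>x. pmf P x * ln 2 + pmf Q x) has_sum (ln 2 + 1)) UNIV"
    using has_sum_add[OF has_sum_cmult_left[OF has_sum_pmf, where c="ln 2"] has_sum_pmf] by simp
  then show "(\<lambda>x. norm (kl_term (pmf P x) ((pmf P x + pmf Q x) / 2))) summable_on UNIV"
    by (rule summable_on_comparison_test[OF has_sum_imp_summable])
       (simp_all add: kl_term_midpoint_abs_bound)
qed

lemma has_sum_cap_disc:
  "((\<lambda>x. js (pmf P x) (pmf Q x)) has_sum cap_disc P Q) UNIV"
proof -
  have "rel_entropy (pmf P) (\<lambda>x. (pmf P x + pmf Q x) / 2)
          = infsum (\<lambda>x. kl_term (pmf P x) ((pmf P x + pmf Q x) / 2)) UNIV"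
       "rel_entropy (pmf Q) (\<lambda>x. (pmf P x + pmf Q x) / 2)
          = infsum (\<lambda>x. kl_term (pmf Q x) ((pmf Q x + pmf P x) / 2)) UNIV"
    by (simp_all add: rel_entropy_def kl_term_def add.commute)
  then show ?thesis
    using has_sum_add[OF has_sum_infsum[OF summable_kl_term_midpoint[of P Q]]
                         has_sum_infsum[OF summable_kl_term_midpoint[of Q P]]]
    by (simp add: cap_disc_def js_def add.commute)
qed

lemma cap_disc_lower_bound_lt1:
  fixes P Q :: "'a pmf"
  assumes "0 \<le> \<epsilon>" "\<epsilon> < 1" "tv_dist P Q = \<epsilon>"
  shows "(1 + \<epsilon>) * ln (1 + \<epsilon>) + (1 - \<epsilon>) * ln (1 - \<epsilon>) \<le> cap_disc P Q"
proof -
  define c1 where "c1 = (ln (1 + \<epsilon>) + ln (1 - \<epsilon>)) / 2"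
  define c2 where "c2 = (ln (1 + \<epsilon>) - ln (1 - \<epsilon>)) / 2"
  have minorant_sum: "((\<lambda>x. c1 * (pmf P x + pmf Q x) + c2 * \<bar>pmf P x - pmf Q x\<bar>)
          has_sum (c1 * 2 + c2 * (2 * \<epsilon>))) UNIV"
    using has_sum_add[OF has_sum_pmf has_sum_pmf, of P Q] has_sum_tv_dist[of P Q] assms(3)
    by (intro has_sum_add has_sum_cmult_right) simp_all
  have "c1 * (pmf P x + pmf Q x) + c2 * \<bar>pmf P x - pmf Q x\<bar> \<le> js (pmf P x) (pmf Q x)"
    for x unfolding c1_def c2_def using assms by (intro js_linear_minorant) auto
  then have "c1 * 2 + c2 * (2 * \<epsilon>) \<le> cap_disc P Q"
    using has_sum_mono[OF minorant_sum has_sum_cap_disc] by blast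
  moreover have "c1 * 2 + c2 * (2 * \<epsilon>) = (1 + \<epsilon>) * ln (1 + \<epsilon>) + (1 - \<epsilon>) * ln (1 - \<epsilon>)"
    unfolding c1_def c2_def by (simp add: field_simps)
  ultimately show ?thesis by simp
qed

text \<open>Total variation \<open>1\<close> means disjoint supports: \<open>min (p, q) = (p + q - |p - q|)/2\<close>
  is nonnegative and sums to \<open>0\<close>, so it vanishes everywhere.\<close>
lemma tv_dist_one_disjoint:
  assumes "tv_dist P Q = 1"
  shows "pmf P x = 0 \<or> pmf Q x = 0"
proof -
  have "((\<lambda>x. (pmf P x + pmf Q x) + (-1) * \<bar>pmf P x - pmf Q x\<bar>) has_sum 0) UNIV"
    using has_sum_add[OF has_sum_add[OF has_sum_pmf[of P] has_sum_pmf[of Q]]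
                         has_sum_cmult_right[OF has_sum_tv_dist[of P Q], where c="-1"]]
      assms by simp
  then have "(pmf P x + pmf Q x) + (-1) * \<bar>pmf P x - pmf Q x\<bar> = 0"
    by (rule nonneg_has_sum_le_0D) (auto simp: abs_if)
  then show ?thesis by (auto simp: abs_if split: if_splits)
qed

lemma cap_disc_tv_dist_one:
  assumes "tv_dist P Q = 1"
  shows "cap_disc P Q = 2 * ln 2"
proof -
  have "((\<lambda>x. js (pmf P x) (pmf Q x)) has_sum (2 * ln 2)) UNIV"
    using has_sum_cmult_left[OF has_sum_add[OF has_sum_pmf[of P] has_sum_pmf[of Q]], where c="ln 2"]
    by (simp add: js_disjoint tv_dist_one_disjoint[OF assms])
  then show ?thesis using has_sum_cap_disc infsumI by metis
qed

lemma cap_disc_lower_bound: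
  fixes P Q :: "'a pmf"
  assumes "0 \<le> \<epsilon>" "\<epsilon> \<le> 1" "tv_dist P Q = \<epsilon>"
  shows "(1 + \<epsilon>) * ln (1 + \<epsilon>) + (1 - \<epsilon>) * ln (1 - \<epsilon>) \<le> cap_disc P Q"
proof (cases "\<epsilon> = 1")
  case True
  then show ?thesis using assms(3) by (simp add: cap_disc_tv_dist_one)
next
  case False
  then have "\<epsilon> < 1" using assms(2) by simp
  then show ?thesis using cap_disc_lower_bound_lt1 assms(1,3) by blast
qed

text \<open>\<open>2 d((1-\<epsilon>)/2 \<parallel> 1/2) = \<phi>(\<epsilon>)\<close>: the two ratios against \<open>1/2\<close> are \<open>1 \<mp> \<epsilon>\<close>.\<close>
lemma bin_rel_entropy_half:
  fixes \<epsilon> :: real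
  assumes "0 \<le> \<epsilon>" "\<epsilon> \<le> 1"
  shows "2 * bin_rel_entropy ((1 - \<epsilon>) / 2) (1 / 2)
           = (1 + \<epsilon>) * ln (1 + \<epsilon>) + (1 - \<epsilon>) * ln (1 - \<epsilon>)"
proof (cases "\<epsilon> = 1")
  case True
  then show ?thesis by (simp add: bin_rel_entropy_def)
next
  case False
  have ratios: "((1 - \<epsilon>) / 2) / (1 / 2) = 1 - \<epsilon>"
                "(1 - (1 - \<epsilon>) / 2) / (1 - 1 / 2) = 1 + \<epsilon>"
    by (simp_all add: field_simps)
  have "1 - (1 - \<epsilon>) / 2 = (1 + \<epsilon>) / 2" by (simp add: field_simps)
  then show ?thesis
    unfolding bin_rel_entropy_def ratios using False assms by (simp add: field_simps)
qed

lemma infsum_bool: "infsum f (UNIV :: bool set) = f False + f True"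
  by (simp add: UNIV_bool)

text \<open>The two Bernoulli distributions \<open>((1-\<epsilon>)/2, (1+\<epsilon>)/2)\<close> and \<open>((1+\<epsilon>)/2, (1-\<epsilon>)/2)\<close>
  are at total variation \<open>\<epsilon>\<close>; their midpoint is uniform, so each relative entropy
  equals the binary one.\<close>
lemma bernoulli_attains:
  fixes \<epsilon> :: real
  assumes "0 \<le> \<epsilon>" "\<epsilon> \<le> 1"
  defines "P \<equiv> bernoulli_pmf ((1 + \<epsilon>) / 2)" and "Q \<equiv> bernoulli_pmf ((1 - \<epsilon>) / 2)"
  shows "pmf P False = (1 - \<epsilon>) / 2" "pmf P True = (1 + \<epsilon>) / 2"
    and "pmf Q False = (1 + \<epsilon>) / 2" "pmf Q True = (1 - \<epsilon>) / 2"
    and "tv_dist P Q = \<epsilon>"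
    and "cap_disc P Q = 2 * bin_rel_entropy ((1 - \<epsilon>) / 2) (1 / 2)"
proof -
  show pF: "pmf P False = (1 - \<epsilon>) / 2" and pT: "pmf P True = (1 + \<epsilon>) / 2"
   and qF: "pmf Q False = (1 + \<epsilon>) / 2" and qT: "pmf Q True = (1 - \<epsilon>) / 2"
    using assms(1,2) unfolding P_def Q_def by (simp_all add: field_simps)
  show "tv_dist P Q = \<epsilon>"
    unfolding tv_dist_def infsum_bool pF pT qF qT using assms(1) by simp
  have mid: "(\<lambda>x. (pmf P x + pmf Q x) / 2) = (\<lambda>_. 1 / 2)"
  proof
    fix x show "(pmf P x + pmf Q x) / 2 = 1 / 2"
      using pF pT qF qT by (cases x) simp_all
  qed
  have "rel_entropy (pmf P) (\<lambda>_. 1 / 2) = bin_rel_entropy ((1 - \<epsilon>) / 2) (1 / 2)"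
       "rel_entropy (pmf Q) (\<lambda>_. 1 / 2) = bin_rel_entropy ((1 - \<epsilon>) / 2) (1 / 2)"
    unfolding rel_entropy_def bin_rel_entropy_def infsum_bool pF pT qF qT
    by (simp_all add: field_simps)
  then show "cap_disc P Q = 2 * bin_rel_entropy ((1 - \<epsilon>) / 2) (1 / 2)"
    unfolding cap_disc_def Let_def mid by simp
qed

theorem proposition3:
  fixes \<epsilon> :: real
  assumes "0 \<le> \<epsilon>" and "\<epsilon> \<le> 1"
  shows "(2 * bin_rel_entropy ((1 - \<epsilon>) / 2) (1 / 2)
           = (1 + \<epsilon>) * ln (1 + \<epsilon>) + (1 - \<epsilon>) * ln (1 - \<epsilon>)) \<and>
         (\<forall>P Q :: ('a::countable) pmf. tv_dist P Q = \<epsilon> \<longrightarrow>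
           2 * bin_rel_entropy ((1 - \<epsilon>) / 2) (1 / 2) \<le> cap_disc P Q) \<and>
         (\<exists>P Q :: bool pmf.
           pmf P False = (1 - \<epsilon>) / 2 \<and> pmf P True = (1 + \<epsilon>) / 2 \<and>
           pmf Q False = (1 + \<epsilon>) / 2 \<and> pmf Q True = (1 - \<epsilon>) / 2 \<and>
           tv_dist P Q = \<epsilon> \<and>
           cap_disc P Q = 2 * bin_rel_entropy ((1 - \<epsilon>) / 2) (1 / 2))"
proof (intro conjI allI impI)
  show binary: "2 * bin_rel_entropy ((1 - \<epsilon>) / 2) (1 / 2)
                  = (1 + \<epsilon>) * ln (1 + \<epsilon>) + (1 - \<epsilon>) * ln (1 - \<epsilon>)"
    using bin_rel_entropy_half[OF assms] .
  fix P Q :: "'a pmf"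
  assume "tv_dist P Q = \<epsilon>"
  then show "2 * bin_rel_entropy ((1 - \<epsilon>) / 2) (1 / 2) \<le> cap_disc P Q"
    unfolding binary using cap_disc_lower_bound assms by blast
next
  show "\<exists>P Q :: bool pmf.
          pmf P False = (1 - \<epsilon>) / 2 \<and> pmf P True = (1 + \<epsilon>) / 2 \<and>
          pmf Q False = (1 + \<epsilon>) / 2 \<and> pmf Q True = (1 - \<epsilon>) / 2 \<and>
          tv_dist P Q = \<epsilon> \<and>
          cap_disc P Q = 2 * bin_rel_entropy ((1 - \<epsilon>) / 2) (1 / 2)"
    using bernoulli_attains[OF assms] by blast
qed

end
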